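(* Let $G$ be a tree on $n$ vertices $1,2,\ldots,n$ with edges $e_1,\ldots,e_{n-1}$ and signless Laplacian $Q$. Then the Moore-Penrose inverse $Q^+=[q^+_{i,j}]$ of $Q$ is given, for all vertices $i,j$, by $$q^+_{i,j}=\frac{(-1)^{d(i,j)}}{n^2}\left(\sum_{k:\ i,j\in G_H(e_k)}|G_T(e_k)|^2+\sum_{k:\ i,j\in G_T(e_k)}|G_H(e_k)|^2-\sum_{k:\ e_k\in P_{i-j}}|G_H(e_k)|\,|G_T(e_k)|\right).$$
   Context: The signless Laplacian is $Q=D+A$, where $A$ is the adjacency matrix and $D$ the diagonal degree matrix. Each edge is written $e_k=\{l_k,m_k\}$ with $l_k<m_k$. The head component $G_H(e_k)$ is the connected component of $G\setminus e_k$ containing $m_k$; the tail component $G_T(e_k)$ is the component containing $l_k$. $|X|$ is the number of vertices of $X$. $d(i,j)$ is the graph distance and $P_{i-j}$ is the (unique) path between $i$ and $j$ in $G$; "$e_k\in P_{i-j}$" means $e_k$ is an edge of this path. The Moore-Penrose inverse of a real matrix $A$ is the unique matrix $A^+$ with $AA^+A=A$, $A^+AA^+=A^+$, $(AA^+)^T=AA^+$, $(A^+A)^T=A^+A$. *)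

theory Defs
  imports "Jordan_Normal_Form.Matrix"
begin

definition walk :: "nat set set \<Rightarrow> nat list \<Rightarrow> bool" where
  "walk E xs \<longleftrightarrow> xs \<noteq> [] \<and> (\<forall>i. Suc i < length xs \<longrightarrow> {xs ! i, xs ! Suc i} \<in> E)"

definition path :: "nat set set \<Rightarrow> nat list \<Rightarrow> bool" where
  "path E xs \<longleftrightarrow> walk E xs \<and> distinct xs"

definition is_cycle :: "nat set set \<Rightarrow> nat list \<Rightarrow> bool" where
  "is_cycle E xs \<longleftrightarrow> walk E xs \<and> length xs \<ge> 4 \<and> hd xs = last xs \<and> distinct (butlast xs)"

definition simple_graph :: "nat set \<Rightarrow> nat set set \<Rightarrow> bool" where
  "simple_graph V E \<longleftrightarrow> finite V \<and> (\<forall>e\<in>E. \<exists>u v. e = {u, v} \<and> u \<noteq> v \<and> u \<in> V \<and> v \<in> V)"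

definition connected_on :: "nat set \<Rightarrow> nat set set \<Rightarrow> bool" where
  "connected_on V E \<longleftrightarrow> (\<forall>u\<in>V. \<forall>v\<in>V. \<exists>xs. walk E xs \<and> hd xs = u \<and> last xs = v)"

definition is_tree :: "nat set \<Rightarrow> nat set set \<Rightarrow> bool" where
  "is_tree V E \<longleftrightarrow> simple_graph V E \<and> V \<noteq> {} \<and> connected_on V E \<and> (\<nexists>xs. is_cycle E xs)"

definition gdist :: "nat set set \<Rightarrow> nat \<Rightarrow> nat \<Rightarrow> nat" where
  "gdist E i j = (LEAST k. \<exists>xs. walk E xs \<and> hd xs = i \<and> last xs = j \<and> length xs = Suc k)"

definition path_edges :: "nat set set \<Rightarrow> nat \<Rightarrow> nat \<Rightarrow> nat set set" where
  "path_edges E i j = (let xs = (THE xs. path E xs \<and> hd xs = i \<and> last xs = j)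
     in {{xs ! k, xs ! Suc k} | k. Suc k < length xs})"

definition component :: "nat set \<Rightarrow> nat set set \<Rightarrow> nat \<Rightarrow> nat set" where
  "component V E' v = {u\<in>V. \<exists>xs. walk E' xs \<and> hd xs = v \<and> last xs = u}"

definition head_comp :: "nat set \<Rightarrow> nat set set \<Rightarrow> nat set \<Rightarrow> nat set" where
  "head_comp V E e = component V (E - {e}) (Max e)"

definition tail_comp :: "nat set \<Rightarrow> nat set set \<Rightarrow> nat set \<Rightarrow> nat set" where
  "tail_comp V E e = component V (E - {e}) (Min e)"

definition degree :: "nat set set \<Rightarrow> nat \<Rightarrow> nat" where
  "degree E v = card {e\<in>E. v \<in> e}"

text \<open>Signless Laplacian Q = D + A of a graph on vertices 1..n; matrix entry (a,b) (0-based)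
  corresponds to vertices a+1, b+1.\<close>
definition signless_laplacian :: "nat \<Rightarrow> nat set set \<Rightarrow> real mat" where
  "signless_laplacian n E = mat n n (\<lambda>(a, b).
     (if a = b then real (degree E (a + 1)) else 0) + (if {a + 1, b + 1} \<in> E then 1 else 0))"

definition is_MP_inverse :: "real mat \<Rightarrow> real mat \<Rightarrow> bool" where
  "is_MP_inverse A X \<longleftrightarrow> X \<in> carrier_mat (dim_col A) (dim_row A) \<and>
     A * X * A = A \<and> X * A * X = X \<and>
     transpose_mat (A * X) = A * X \<and> transpose_mat (X * A) = X * A"

definition MP_inverse :: "real mat \<Rightarrow> real mat" where
  "MP_inverse A = (THE X. is_MP_inverse A X)"

end

(*
  The sign s(v) = (-1)^#{e. v in the head component of e} flips along every edge, since
  crossing an edge f changes only whether f's own head component contains the vertex; so s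
  is the bipartition of the tree and, with S = diag s, Q = S L S for the Laplacian L.
  For an edge e with sides H_e, T_e put w_e = |T_e| 1_(H_e) - |H_e| 1_(T_e) and let
  b_e = 1_(m_e) - 1_(l_e) be its oriented incidence vector. Then b_e . w_f = n [e = f], and
  sum_e b_e(a) w_e(b) = n [a = b] - 1 because the far sides of the edges at a partition the
  other vertices. These identities give Q X = X Q = I - s s^T / n for
  X = S (sum_e w_e w_e^T) S / n^2, and this projection fixes both Q and X, so X = Q^+.
  Expanding w_e(i) w_e(j) by the sides of e containing i and j yields the three sums, the
  edges separating i from j being exactly those of P_(i-j); finally s(i) s(j) = (-1)^d(i,j).
*)
theory Submission
  imports Defs
begin

section \<open>Walks and reachability\<close>

definition reachable :: "nat set set \<Rightarrow> nat \<Rightarrow> nat \<Rightarrow> bool" where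
  "reachable F u v \<longleftrightarrow> (\<exists>xs. walk F xs \<and> hd xs = u \<and> last xs = v)"

lemma walk_Nil[simp]: "\<not> walk F []"
  by (simp add: walk_def)

lemma walk_single[simp]: "walk F [x]"
  by (simp add: walk_def)

lemma walk_Cons_Cons[simp]: "walk F (x # y # xs) \<longleftrightarrow> {x, y} \<in> F \<and> walk F (y # xs)"
  by (auto simp: walk_def nth_Cons split: nat.splits)

lemma walk_mono: "walk F xs \<Longrightarrow> F \<subseteq> G \<Longrightarrow> walk G xs"
  unfolding walk_def by blast

lemma walk_drop: "walk F xs \<Longrightarrow> k < length xs \<Longrightarrow> walk F (drop k xs)"
  unfolding walk_def by (auto simp: add.commute)

lemma walk_take: "walk F xs \<Longrightarrow> 0 < k \<Longrightarrow> walk F (take k xs)"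
  unfolding walk_def by auto

lemma walk_snoc: "walk F xs \<Longrightarrow> {last xs, y} \<in> F \<Longrightarrow> walk F (xs @ [y])"
  by (induction xs rule: induct_list012) auto

lemma reachable_refl: "reachable F u u"
  unfolding reachable_def by (rule exI[of _ "[u]"]) simp

lemma reachable_Cons: "{x, y} \<in> F \<Longrightarrow> reachable F y w \<Longrightarrow> reachable F x w"
  unfolding reachable_def by (metis hd_Cons_tl last_ConsR list.sel(1) walk_Cons_Cons walk_Nil)

lemma reachable_edge: "{x, y} \<in> F \<Longrightarrow> reachable F x y"
  using reachable_Cons reachable_refl by metis

lemma reachable_trans:
  assumes "reachable F u v" and "reachable F v w"
  shows "reachable F u w"
proof -
  have "reachable F (hd xs) w" if "walk F xs" "reachable F (last xs) w" for xs
    using that by (induction xs rule: induct_list012) (auto intro: reachable_Cons)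
  then show ?thesis
    using assms unfolding reachable_def[of F u v] by blast
qed

lemma reachable_sym:
  assumes "reachable F u v"
  shows "reachable F v u"
proof -
  have "reachable F (last xs) (hd xs)" if "walk F xs" for xs
    using that
  proof (induction xs rule: induct_list012)
    case (3 x y zs)
    then have "reachable F (last (y # zs)) y" "reachable F y x"
      by (auto intro: reachable_edge simp: insert_commute)
    then show ?case
      using reachable_trans by auto
  qed (auto intro: reachable_refl)
  then show ?thesis
    using assms unfolding reachable_def[of F u v] by blast
qed

lemma reachable_imp_path:
  assumes "reachable F u v"
  obtains ps where "path F ps" "hd ps = u" "last ps = v"
proof -
  have "\<exists>ps. path F ps \<and> hd ps = hd xs \<and> last ps = last xs" if "walk F xs" for xs
    using that
  proof (induction xs rule: induct_list012)
    case (2 x)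
    show ?case
      by (intro exI[of _ "[x]"]) (simp add: path_def)
  next
    case (3 x y zs)
    then obtain ps where ps: "path F ps" "hd ps = y" "last ps = last (y # zs)"
      by auto
    show ?case
    proof (cases "x \<in> set ps")
      case False
      from ps obtain r where "ps = y # r"
        by (cases ps) (auto simp: path_def)
      then show ?thesis
        using False ps 3 by (intro exI[of _ "x # ps"]) (auto simp: path_def)
    next
      case True
      \<comment> \<open>the path already passes through \<open>x\<close>: cut off the part before it\<close>
      then obtain k where k: "k < length ps" "ps ! k = x"
        by (meson in_set_conv_nth)
      then show ?thesis
        using ps by (intro exI[of _ "drop k ps"])
          (auto simp: path_def walk_drop hd_drop_conv_nth)
    qed
  qed simp
  then show ?thesis
    using assms that unfolding reachable_def by blast
qed

lemma path_hd_eq_last: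
  assumes "path F xs" and "hd xs = last xs"
  shows "xs = [hd xs]"
proof (cases xs)
  case (Cons x r)
  have "x \<notin> set r"
    using assms(1) Cons by (simp add: path_def)
  then have "r = []"
    using assms(2) Cons by (metis last_ConsR last_in_set list.sel(1))
  then show ?thesis
    using Cons by simp
qed (use assms in \<open>simp add: path_def\<close>)

lemma path_ConsD: "path F (x # xs) \<Longrightarrow> xs \<noteq> [] \<Longrightarrow> path F xs"
  by (cases xs) (auto simp: path_def)

lemma distinct_consecutive_pair_eq:
  assumes "distinct xs" "Suc a < length xs" "Suc k < length xs"
    and "{xs ! a, xs ! Suc a} = {xs ! k, xs ! Suc k}"
  shows "a = k"
  using assms by (auto simp: doubleton_eq_iff nth_eq_iff_index_eq)

lemma walk_delete_edge:
  assumes "walk F xs" and "\<And>k. Suc k < length xs \<Longrightarrow> {xs ! k, xs ! Suc k} \<noteq> e"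
  shows "walk (F - {e}) xs"
  using assms unfolding walk_def by blast

lemma path_split_at_edge:
  assumes p: "path F xs" and k: "Suc k < length xs"
  defines "e \<equiv> {xs ! k, xs ! Suc k}"
  shows "reachable (F - {e}) (hd xs) (xs ! k)" and "reachable (F - {e}) (xs ! Suc k) (last xs)"
proof -
  have w: "walk F xs" and d: "distinct xs"
    using p by (auto simp: path_def)
  have other: "{xs ! t, xs ! Suc t} \<noteq> e" if "Suc t < length xs" "t \<noteq> k" for t
    using distinct_consecutive_pair_eq[OF d that(1) k] that(2) unfolding e_def by blast
  have "walk (F - {e}) (take (Suc k) xs)"
  proof (rule walk_delete_edge)
    fix t
    assume "Suc t < length (take (Suc k) xs)"
    then show "{take (Suc k) xs ! t, take (Suc k) xs ! Suc t} \<noteq> e"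
      using other[of t] by simp
  qed (use w walk_take in simp)
  moreover have "hd (take (Suc k) xs) = hd xs"
    by simp
  moreover have "last (take (Suc k) xs) = xs ! k"
    using k by (simp add: take_Suc_conv_app_nth)
  ultimately show "reachable (F - {e}) (hd xs) (xs ! k)"
    unfolding reachable_def by metis
  have "walk (F - {e}) (drop (Suc k) xs)"
  proof (rule walk_delete_edge)
    fix t
    assume "Suc t < length (drop (Suc k) xs)"
    then show "{drop (Suc k) xs ! t, drop (Suc k) xs ! Suc t} \<noteq> e"
      using other[of "Suc k + t"] by simp
  qed (use w k walk_drop in simp)
  then show "reachable (F - {e}) (xs ! Suc k) (last xs)"
    unfolding reachable_def using k
    by (intro exI[of _ "drop (Suc k) xs"]) (auto simp: hd_drop_conv_nth)
qed

section \<open>The Moore-Penrose inverse\<close>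

lemma is_MP_inverse_unique:
  assumes A: "A \<in> carrier_mat m n" and X: "is_MP_inverse A X" and Y: "is_MP_inverse A Y"
  shows "X = Y"
proof -
  have XY: "X \<in> carrier_mat n m" "Y \<in> carrier_mat n m"
    using A X Y by (auto simp: is_MP_inverse_def)
  have T: "transpose_mat A \<in> carrier_mat n m" "transpose_mat X \<in> carrier_mat m n"
    "transpose_mat Y \<in> carrier_mat m n"
    using A XY by auto
  note MP = X[unfolded is_MP_inverse_def] Y[unfolded is_MP_inverse_def]
  have AX: "A * X = transpose_mat X * transpose_mat A"
    using MP transpose_mult[OF A XY(1)] by simp
  have YA: "Y * A = transpose_mat A * transpose_mat Y"
    using MP transpose_mult[OF XY(2) A] by simp
  have AYA: "transpose_mat A = transpose_mat A * (A * Y)"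
    using MP transpose_mult[OF mult_carrier_mat[OF A XY(2)] A] by simp
  have AXA: "transpose_mat A = (X * A) * transpose_mat A"
    using MP transpose_mult[OF A mult_carrier_mat[OF XY(1) A]]
    by (metis assoc_mult_mat[OF A XY(1) A])
  have AXAY: "(A * X) * (A * Y) = A * Y"
    using MP assoc_mult_mat[OF mult_carrier_mat[OF A XY(1)] A XY(2)] by simp
  have XAYA: "(X * A) * (Y * A) = X * A"
    using MP assoc_mult_mat[OF XY(1) A mult_carrier_mat[OF XY(2) A]] assoc_mult_mat[OF A XY(2) A]
    by simp
  have "X = X * (A * X)"
    using MP assoc_mult_mat[OF XY(1) A XY(1)] by simp
  also have "\<dots> = X * (transpose_mat X * (transpose_mat A * (A * Y)))"
    unfolding AX by (subst (1) AYA) (rule refl)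
  also have "\<dots> = X * ((A * X) * (A * Y))"
    unfolding AX using assoc_mult_mat[OF T(2,1) mult_carrier_mat[OF A XY(2)]] by simp
  also have "\<dots> = X * A * Y"
    unfolding AXAY using assoc_mult_mat[OF XY(1) A XY(2)] by simp
  finally have XAY: "X = X * A * Y" .
  have "Y = (Y * A) * Y"
    using MP by simp
  also have "\<dots> = (X * A) * transpose_mat A * transpose_mat Y * Y"
    unfolding YA by (subst (1) AXA) (rule refl)
  also have "\<dots> = (X * A) * (Y * A) * Y"
    unfolding YA using assoc_mult_mat[OF mult_carrier_mat[OF XY(1) A] T(1,3)] by simp
  also have "\<dots> = X * A * Y"
    unfolding XAYA ..
  finally show ?thesis
    using XAY by simp
qed

lemma MP_inverse_eqI:
  assumes "A \<in> carrier_mat m n" and "is_MP_inverse A X"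
  shows "MP_inverse A = X"
  unfolding MP_inverse_def using assms is_MP_inverse_unique by blast

lemma is_MP_inverse_projectionI:
  assumes "A * X = P" and "X * A = P" and "P * A = A" and "P * X = X"
    and "transpose_mat P = P" and "X \<in> carrier_mat n n" and "A \<in> carrier_mat n n"
  shows "is_MP_inverse A X"
  using assms by (simp add: is_MP_inverse_def)

section \<open>Matrices indexed by the vertices \<open>1..n\<close>\<close>

definition vertex_mat :: "nat \<Rightarrow> (nat \<Rightarrow> nat \<Rightarrow> 'a) \<Rightarrow> 'a mat" where
  "vertex_mat n f = mat n n (\<lambda>(a, b). f (Suc a) (Suc b))"

lemma dim_vertex_mat[simp]: "dim_row (vertex_mat n f) = n" "dim_col (vertex_mat n f) = n"
  by (simp_all add: vertex_mat_def)

lemma vertex_mat_carrier: "vertex_mat n f \<in> carrier_mat n n"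
  by (simp add: vertex_mat_def)

lemma index_vertex_mat[simp]:
  "a < n \<Longrightarrow> b < n \<Longrightarrow> vertex_mat n f $$ (a, b) = f (Suc a) (Suc b)"
  by (simp add: vertex_mat_def)

lemma vertex_mat_cong:
  assumes "\<And>u v. u \<in> {1..n} \<Longrightarrow> v \<in> {1..n} \<Longrightarrow> f u v = g u v"
  shows "vertex_mat n f = vertex_mat n g"
  using assms by (intro eq_matI) simp_all

lemma transpose_vertex_mat: "transpose_mat (vertex_mat n f) = vertex_mat n (\<lambda>u v. f v u)"
  by (intro eq_matI) simp_all

lemma times_vertex_mat:
  "vertex_mat n f * vertex_mat n g = vertex_mat n (\<lambda>u t. \<Sum>v\<in>{1..n}. f u v * g v t)"
proof (rule eq_matI)
  fix a b
  assume "a < dim_row (vertex_mat n (\<lambda>u t. \<Sum>v\<in>{1..n}. f u v * g v t))"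
    and "b < dim_col (vertex_mat n (\<lambda>u t. \<Sum>v\<in>{1..n}. f u v * g v t))"
  then have ab: "a < n" "b < n"
    by simp_all
  then have "(vertex_mat n f * vertex_mat n g) $$ (a, b) = (\<Sum>k<n. f (Suc a) (Suc k) * g (Suc k) (Suc b))"
    by (simp add: scalar_prod_def lessThan_atLeast0)
  also have "\<dots> = (\<Sum>v\<in>{1..n}. f (Suc a) v * g v (Suc b))"
    by (simp add: sum.atLeast1_atMost_eq)
  finally show "(vertex_mat n f * vertex_mat n g) $$ (a, b) = vertex_mat n (\<lambda>u t. \<Sum>v\<in>{1..n}. f u v * g v t) $$ (a, b)"
    using ab by simp
qed simp_all

section \<open>Edges of a tree and their two sides\<close>

locale tree_graph =
  fixes n :: nat and E :: "nat set set"
  assumes tree: "is_tree {1..n} E"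
begin

abbreviation Hd :: "nat set \<Rightarrow> nat set" where
  "Hd e \<equiv> head_comp {1..n} E e"

abbreviation Tl :: "nat set \<Rightarrow> nat set" where
  "Tl e \<equiv> tail_comp {1..n} E e"

lemma edgeE:
  assumes "e \<in> E"
  obtains u v where "e = {u, v}" "u \<noteq> v" "u \<in> {1..n}" "v \<in> {1..n}"
  using assms tree by (auto simp: is_tree_def simple_graph_def)

lemma edge_subset: "e \<in> E \<Longrightarrow> e \<subseteq> {1..n}"
  by (auto elim: edgeE)

lemma finite_edges: "finite E"
  using finite_subset[of E "Pow {1..n}"] edge_subset by auto

lemma connected_reachable: "u \<in> {1..n} \<Longrightarrow> v \<in> {1..n} \<Longrightarrow> reachable E u v"
  using tree by (auto simp: is_tree_def connected_on_def reachable_def)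

lemma edge_Min_Max:
  assumes "e \<in> E"
  shows "e = {Min e, Max e}" and "Min e < Max e" and "Min e \<in> {1..n}" and "Max e \<in> {1..n}"
proof -
  obtain u v where uv: "e = {u, v}" "u \<noteq> v" "u \<in> {1..n}" "v \<in> {1..n}"
    using assms by (rule edgeE)
  then have "Min e = min u v" "Max e = max u v"
    by auto
  then show "e = {Min e, Max e}" "Min e < Max e" "Min e \<in> {1..n}" "Max e \<in> {1..n}"
    using uv by (auto simp: min_def max_def)
qed

lemma not_reachable_delete_edge:
  assumes e: "e \<in> E" "e = {u, v}" and "u \<noteq> v"
  shows "\<not> reachable (E - {e}) u v"
proof
  assume "reachable (E - {e}) u v"
  then obtain ps where ps: "path (E - {e}) ps" "hd ps = u" "last ps = v"
    by (rule reachable_imp_path)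
  have ne: "ps \<noteq> []"
    using ps by (auto simp: path_def)
  have "length ps \<noteq> 0" and "length ps \<noteq> 1"
    using ps \<open>u \<noteq> v\<close> by (auto simp: path_def length_Suc_conv)
  moreover have "length ps \<noteq> 2"
  proof
    assume "length ps = 2"
    then obtain a b where "ps = [a, b]"
      by (auto simp: numeral_2_eq_2 length_Suc_conv)
    then show False
      using ps e by (auto simp: path_def)
  qed
  ultimately have "length ps \<ge> 3"
    by presburger
  \<comment> \<open>closing the path with \<open>e\<close> yields a cycle\<close>
  moreover have "walk E (ps @ [u])"
    using ps e walk_mono[of "E - {e}" ps E] by (intro walk_snoc) (auto simp: path_def insert_commute)
  moreover have "hd (ps @ [u]) = last (ps @ [u])" and "distinct (butlast (ps @ [u]))"
    using ps ne by (auto simp: path_def)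
  ultimately have "is_cycle E (ps @ [u])"
    by (simp add: is_cycle_def)
  then show False
    using tree by (auto simp: is_tree_def)
qed

lemma reachable_delete_edge_ends:
  assumes e: "e \<in> E" "e = {u, v}" and w: "w \<in> {1..n}"
  shows "reachable (E - {e}) u w \<or> reachable (E - {e}) v w"
proof -
  have "reachable (E - {e}) u (last xs) \<or> reachable (E - {e}) v (last xs)"
    if "walk E xs" "reachable (E - {e}) u (hd xs) \<or> reachable (E - {e}) v (hd xs)" for xs
    using that
  proof (induction xs rule: induct_list012)
    case (3 x y zs)
    have "reachable (E - {e}) u y \<or> reachable (E - {e}) v y"
    proof (cases "{x, y} = e")
      case True
      then have "y = u \<or> y = v"
        using e by (auto simp: doubleton_eq_iff)
      then show ?thesis
        using reachable_refl by metis
    next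
      case False
      then have "reachable (E - {e}) x y"
        using "3.prems" by (intro reachable_edge) auto
      then show ?thesis
        using "3.prems" reachable_trans by (metis list.sel(1))
    qed
    then show ?case
      using "3.IH"(2) "3.prems" by simp
  qed auto
  moreover have "u \<in> {1..n}"
    using e(1) by (rule edgeE) (use e(2) in \<open>auto simp: doubleton_eq_iff\<close>)
  then obtain xs where "walk E xs" "hd xs = u" "last xs = w"
    using connected_reachable[OF _ w] unfolding reachable_def by blast
  ultimately show ?thesis
    using reachable_refl by metis
qed

lemma head_comp_eq: "Hd e = {w \<in> {1..n}. reachable (E - {e}) (Max e) w}"
  by (simp add: head_comp_def component_def reachable_def)

lemma tail_comp_eq: "Tl e = {w \<in> {1..n}. reachable (E - {e}) (Min e) w}"
  by (simp add: tail_comp_def component_def reachable_def)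

lemma head_tail_disjoint:
  assumes e: "e \<in> E"
  shows "Hd e \<inter> Tl e = {}"
proof (rule ccontr)
  assume "Hd e \<inter> Tl e \<noteq> {}"
  then obtain w where "reachable (E - {e}) (Max e) w" "reachable (E - {e}) (Min e) w"
    unfolding head_comp_eq tail_comp_eq by blast
  then have "reachable (E - {e}) (Min e) (Max e)"
    using reachable_sym reachable_trans by metis
  then show False
    using not_reachable_delete_edge[OF e edge_Min_Max(1)[OF e]] edge_Min_Max(2)[OF e] by simp
qed

lemma head_tail_cover:
  assumes e: "e \<in> E"
  shows "Hd e \<union> Tl e = {1..n}"
  using reachable_delete_edge_ends[OF e edge_Min_Max(1)[OF e]]
  unfolding head_comp_eq tail_comp_eq by blast

lemma head_tail_subset: "Hd e \<subseteq> {1..n}" "Tl e \<subseteq> {1..n}"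
  unfolding head_comp_eq tail_comp_eq by auto

lemma in_tail_iff: "e \<in> E \<Longrightarrow> v \<in> {1..n} \<Longrightarrow> v \<in> Tl e \<longleftrightarrow> v \<notin> Hd e"
  using head_tail_disjoint head_tail_cover by blast

lemma card_head_tail:
  assumes e: "e \<in> E"
  shows "card (Hd e) + card (Tl e) = n"
proof -
  have "finite (Hd e)" "finite (Tl e)"
    using finite_subset[OF head_tail_subset(1)] finite_subset[OF head_tail_subset(2)] by simp_all
  then have "card (Hd e) + card (Tl e) = card (Hd e \<union> Tl e)"
    using card_Un_disjoint[OF _ _ head_tail_disjoint[OF e], symmetric] by simp
  also have "\<dots> = n"
    unfolding head_tail_cover[OF e] by simp
  finally show ?thesis .
qed

lemma Max_in_head: "e \<in> E \<Longrightarrow> Max e \<in> Hd e"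
  unfolding head_comp_eq using edge_Min_Max(4) reachable_refl by simp

lemma Min_notin_head: "e \<in> E \<Longrightarrow> Min e \<notin> Hd e"
proof -
  assume e: "e \<in> E"
  have "Min e \<in> Tl e"
    unfolding tail_comp_eq using edge_Min_Max(3)[OF e] reachable_refl by simp
  then show ?thesis
    using head_tail_disjoint[OF e] by blast
qed

lemma reachable_delete_edge_iff:
  assumes e: "e \<in> E" and ab: "a \<in> {1..n}" "b \<in> {1..n}"
  shows "reachable (E - {e}) a b \<longleftrightarrow> (a \<in> Hd e \<longleftrightarrow> b \<in> Hd e)"
proof
  assume ab_reach: "reachable (E - {e}) a b"
  have "reachable (E - {e}) (Max e) a \<longleftrightarrow> reachable (E - {e}) (Max e) b"
    using reachable_trans[OF _ ab_reach] reachable_trans[OF _ reachable_sym[OF ab_reach]] by blast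
  then show "a \<in> Hd e \<longleftrightarrow> b \<in> Hd e"
    using ab unfolding head_comp_eq by simp
next
  assume "a \<in> Hd e \<longleftrightarrow> b \<in> Hd e"
  then consider "a \<in> Hd e" "b \<in> Hd e" | "a \<in> Tl e" "b \<in> Tl e"
    using in_tail_iff[OF e] ab by blast
  then show "reachable (E - {e}) a b"
  proof cases
    case 1
    then have "reachable (E - {e}) (Max e) a" "reachable (E - {e}) (Max e) b"
      unfolding head_comp_eq by simp_all
    then show ?thesis
      using reachable_sym reachable_trans by metis
  next
    case 2
    then have "reachable (E - {e}) (Min e) a" "reachable (E - {e}) (Min e) b"
      unfolding tail_comp_eq by simp_all
    then show ?thesis
      using reachable_sym reachable_trans by metis
  qed
qed

lemma edge_ends_same_side:
  assumes "e \<in> E" and "f \<in> E" and "f \<noteq> e"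
  shows "Min e \<in> Hd f \<longleftrightarrow> Max e \<in> Hd f"
proof -
  have "{Min e, Max e} \<in> E - {f}"
    using assms edge_Min_Max(1)[of e] by auto
  then have "reachable (E - {f}) (Min e) (Max e)"
    by (rule reachable_edge)
  then show ?thesis
    using reachable_delete_edge_iff[OF assms(2) edge_Min_Max(3,4)[OF assms(1)]] by simp
qed

section \<open>Paths in a tree\<close>

lemma path_edge_separating:
  assumes p: "path E xs" and k: "Suc k < length xs"
  shows "{xs ! k, xs ! Suc k} \<in> E" and "\<not> reachable (E - {{xs ! k, xs ! Suc k}}) (hd xs) (last xs)"
proof -
  let ?e = "{xs ! k, xs ! Suc k}"
  show e: "?e \<in> E"
    using p k by (auto simp: path_def walk_def)
  have "xs ! k \<noteq> xs ! Suc k"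
    using p k by (auto simp: path_def nth_eq_iff_index_eq)
  then have not_adjacent: "\<not> reachable (E - {?e}) (xs ! k) (xs ! Suc k)"
    using not_reachable_delete_edge[OF e] by simp
  have to_hd: "reachable (E - {?e}) (xs ! k) (hd xs)"
    by (rule reachable_sym[OF path_split_at_edge(1)[OF p k]])
  have from_last: "reachable (E - {?e}) (last xs) (xs ! Suc k)"
    by (rule reachable_sym[OF path_split_at_edge(2)[OF p k]])
  show "\<not> reachable (E - {?e}) (hd xs) (last xs)"
  proof
    assume "reachable (E - {?e}) (hd xs) (last xs)"
    then show False
      using not_adjacent reachable_trans[OF reachable_trans[OF to_hd] from_last] by blast
  qed
qed

lemma path_edges_separating:
  assumes p: "path E xs" and ij: "hd xs = i" "last xs = j"
  shows "{{xs ! k, xs ! Suc k} | k. Suc k < length xs} = {e \<in> E. \<not> reachable (E - {e}) i j}"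
proof (intro equalityI subsetI)
  fix e
  assume "e \<in> {{xs ! k, xs ! Suc k} | k. Suc k < length xs}"
  then obtain k where "Suc k < length xs" "e = {xs ! k, xs ! Suc k}"
    by blast
  then show "e \<in> {e \<in> E. \<not> reachable (E - {e}) i j}"
    using path_edge_separating[OF p] ij by simp
next
  fix e
  assume e: "e \<in> {e \<in> E. \<not> reachable (E - {e}) i j}"
  show "e \<in> {{xs ! k, xs ! Suc k} | k. Suc k < length xs}"
  proof (rule ccontr)
    assume "e \<notin> {{xs ! k, xs ! Suc k} | k. Suc k < length xs}"
    then have "walk (E - {e}) xs"
      using p by (intro walk_delete_edge) (auto simp: path_def)
    then show False
      using e ij unfolding reachable_def by blast
  qed
qed

lemma unique_separating_edge_at:
  assumes i: "i \<in> {1..n}" and j: "j \<in> {1..n}" and "i \<noteq> j"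
  shows "\<exists>!e. e \<in> E \<and> i \<in> e \<and> \<not> reachable (E - {e}) i j"
proof -
  obtain ps where ps: "path E ps" "hd ps = i" "last ps = j"
    using connected_reachable[OF i j] by (rule reachable_imp_path)
  have "ps \<noteq> [i]"
  proof
    assume "ps = [i]"
    then show False
      using ps \<open>i \<noteq> j\<close> by simp
  qed
  with ps obtain y r where ps_eq: "ps = i # y # r"
    by (cases ps; cases "tl ps") (auto simp: path_def)
  note sep = path_edges_separating[OF ps]
  show ?thesis
  proof (rule ex1I)
    have "{i, y} \<in> {{ps ! k, ps ! Suc k} | k. Suc k < length ps}"
      unfolding ps_eq by (intro CollectI exI[of _ 0]) simp
    then show "{i, y} \<in> E \<and> i \<in> {i, y} \<and> \<not> reachable (E - {{i, y}}) i j"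
      unfolding sep by simp
  next
    fix e
    assume e: "e \<in> E \<and> i \<in> e \<and> \<not> reachable (E - {e}) i j"
    then obtain k where k: "Suc k < length ps" "e = {ps ! k, ps ! Suc k}"
      using sep by blast
    \<comment> \<open>\<open>i\<close> occurs in the path only at position 0\<close>
    have "ps ! 0 = i"
      using ps_eq by simp
    then have "ps ! k = ps ! 0 \<or> ps ! Suc k = ps ! 0"
      using e k by auto
    moreover have "distinct ps" "ps \<noteq> []"
      using ps(1) ps_eq by (simp_all add: path_def)
    ultimately have "k = 0"
      using k(1) nth_eq_iff_index_eq[of ps k 0] nth_eq_iff_index_eq[of ps "Suc k" 0] by auto
    then show "e = {i, y}"
      using k ps_eq by simp
  qed
qed

lemma path_second_vertex_eq:
  assumes p: "path E (x # y # zs)" and p': "path E (x # y' # zs')"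
    and j: "last (y # zs) = last (y' # zs')" "last (y # zs) \<in> {1..n}"
  shows "y = y'"
proof -
  let ?j = "last (y # zs)"
  have "x \<notin> set (y # zs)"
    using p by (simp add: path_def)
  then have "x \<noteq> ?j" and "x \<noteq> y"
    using last_in_set[of "y # zs"] by auto
  have first: "{x, y} \<in> E \<and> x \<in> {x, y} \<and> \<not> reachable (E - {{x, y}}) x ?j"
    "{x, y'} \<in> E \<and> x \<in> {x, y'} \<and> \<not> reachable (E - {{x, y'}}) x ?j"
    using path_edge_separating[OF p, of 0] path_edge_separating[OF p', of 0] j(1) by simp_all
  have "x \<in> {1..n}"
    using first(1) edge_subset by blast
  then have "{x, y} = {x, y'}"
    using unique_separating_edge_at[OF _ j(2) \<open>x \<noteq> ?j\<close>] first by blast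
  then show ?thesis
    using \<open>x \<noteq> y\<close> by (auto simp: doubleton_eq_iff)
qed

lemma path_unique:
  "path E xs \<Longrightarrow> path E ys \<Longrightarrow> hd xs = hd ys \<Longrightarrow> last xs = last ys \<Longrightarrow> last xs \<in> {1..n} \<Longrightarrow> xs = ys"
proof (induction xs arbitrary: ys)
  case Nil
  then show ?case
    by (simp add: path_def)
next
  case (Cons x xs)
  show ?case
  proof (cases "xs = []")
    case True
    then show ?thesis
      using Cons.prems path_hd_eq_last[of E ys] by simp
  next
    case False
    then obtain y zs where xs: "xs = y # zs"
      by (meson list.exhaust)
    obtain ys' where ys: "ys = x # ys'"
      using Cons.prems(2,3) by (cases ys) (auto simp: path_def)
    have "ys' \<noteq> []"
    proof
      assume "ys' = []"
      then have "hd (x # xs) = last (x # xs)"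
        using Cons.prems(4) ys by simp
      then show False
        using path_hd_eq_last[OF Cons.prems(1)] False by simp
    qed
    then obtain y' zs' where ys': "ys' = y' # zs'"
      by (meson list.exhaust)
    have "y = y'"
      using path_second_vertex_eq[of x y zs y' zs'] Cons.prems(1,2,4,5) xs ys ys' by simp
    moreover have "path E xs" "path E ys'"
      using path_ConsD[OF Cons.prems(1) False] path_ConsD[OF _ \<open>ys' \<noteq> []\<close>] Cons.prems(2) ys
      by simp_all
    ultimately have "xs = ys'"
      using Cons.IH[of ys'] Cons.prems(4,5) ys by (simp add: xs ys')
    then show ?thesis
      using ys by simp
  qed
qed

lemma path_edges_eq_separating:
  assumes i: "i \<in> {1..n}" and j: "j \<in> {1..n}"
  shows "path_edges E i j = {e \<in> E. \<not> reachable (E - {e}) i j}"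
proof -
  obtain ps where ps: "path E ps" "hd ps = i" "last ps = j"
    using connected_reachable[OF i j] by (rule reachable_imp_path)
  have "(THE xs. path E xs \<and> hd xs = i \<and> last xs = j) = ps"
  proof (rule the_equality)
    fix xs
    assume "path E xs \<and> hd xs = i \<and> last xs = j"
    then show "xs = ps"
      using path_unique[of xs ps] ps j by simp
  qed (use ps in simp)
  then show ?thesis
    unfolding path_edges_def Let_def using path_edges_separating[OF ps] by simp
qed

section \<open>The bipartition sign of a vertex\<close>

definition vertex_sign :: "nat \<Rightarrow> real" where
  "vertex_sign v = (-1) ^ card {e \<in> E. v \<in> Hd e}"

lemma vertex_sign_square: "vertex_sign v * vertex_sign v = 1"
  by (simp add: vertex_sign_def flip: power_mult_distrib)

lemma vertex_sign_Max:
  assumes f: "f \<in> E"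
  shows "vertex_sign (Max f) = - vertex_sign (Min f)"
proof -
  have "{e \<in> E. Max f \<in> Hd e} = insert f {e \<in> E. Min f \<in> Hd e}"
    using edge_ends_same_side[OF f] Max_in_head[OF f] Min_notin_head[OF f] f by blast
  moreover have "f \<notin> {e \<in> E. Min f \<in> Hd e}" and "finite {e \<in> E. Min f \<in> Hd e}"
    using Min_notin_head[OF f] finite_edges by simp_all
  ultimately show ?thesis
    unfolding vertex_sign_def by simp
qed

lemma vertex_sign_adjacent:
  assumes xy: "{x, y} \<in> E"
  shows "vertex_sign y = - vertex_sign x"
proof -
  have "x \<noteq> y"
    using xy by (auto elim: edgeE)
  then have "x = Min {x, y} \<and> y = Max {x, y} \<or> x = Max {x, y} \<and> y = Min {x, y}"
    by (cases "x < y") (auto simp: min_def max_def)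
  then show ?thesis
    using vertex_sign_Max[OF xy] by auto
qed

lemma vertex_sign_walk: "walk E xs \<Longrightarrow> vertex_sign (last xs) = (-1) ^ (length xs - 1) * vertex_sign (hd xs)"
proof (induction xs rule: induct_list012)
  case (3 x y zs)
  then show ?case
    using vertex_sign_adjacent[of x y] by simp
qed auto

lemma power_gdist_eq_vertex_sign:
  assumes i: "i \<in> {1..n}" and j: "j \<in> {1..n}"
  shows "(-1) ^ gdist E i j = vertex_sign i * vertex_sign j"
proof -
  obtain xs where "walk E xs" "hd xs = i" "last xs = j"
    using connected_reachable[OF i j] unfolding reachable_def by blast
  then have "\<exists>k xs. walk E xs \<and> hd xs = i \<and> last xs = j \<and> length xs = Suc k"
    by (intro exI[of _ "length xs - 1"] exI[of _ xs]) (cases xs; auto)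
  then have "\<exists>xs. walk E xs \<and> hd xs = i \<and> last xs = j \<and> length xs = Suc (gdist E i j)"
    unfolding gdist_def by (rule LeastI_ex)
  then have "vertex_sign j = (-1) ^ gdist E i j * vertex_sign i"
    using vertex_sign_walk by fastforce
  then have "vertex_sign i * vertex_sign j = (-1) ^ gdist E i j * (vertex_sign i * vertex_sign i)"
    by simp
  then show ?thesis
    using vertex_sign_square by simp
qed

section \<open>Cut vectors and oriented incidence vectors\<close>

definition cut_vector :: "nat set \<Rightarrow> nat \<Rightarrow> real" where
  "cut_vector e v = (if v \<in> Hd e then real (card (Tl e)) else - real (card (Hd e)))"

definition incidence :: "nat set \<Rightarrow> nat \<Rightarrow> real" where
  "incidence e u = (if u = Max e then 1 else if u = Min e then -1 else 0)"

definition far_side :: "nat \<Rightarrow> nat set \<Rightarrow> nat set" where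
  "far_side a e = {v \<in> {1..n}. \<not> reachable (E - {e}) a v}"

lemma cut_vector_other_edge:
  assumes "e \<in> E" and "f \<in> E" and "f \<noteq> e"
  shows "cut_vector f (Max e) = cut_vector f (Min e)"
  using edge_ends_same_side[OF assms] by (simp add: cut_vector_def)

lemma cut_vector_jump:
  assumes e: "e \<in> E"
  shows "cut_vector e (Max e) - cut_vector e (Min e) = real n"
  using Max_in_head[OF e] Min_notin_head[OF e] card_head_tail[OF e]
  by (simp add: cut_vector_def flip: of_nat_add)

lemma sum_cut_vector_jump:
  assumes e: "e \<in> E"
  shows "(\<Sum>f\<in>E. cut_vector f b * (cut_vector f (Max e) - cut_vector f (Min e))) = real n * cut_vector e b"
proof -
  have "(\<Sum>f\<in>E. cut_vector f b * (cut_vector f (Max e) - cut_vector f (Min e)))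
      = (\<Sum>f\<in>E. if f = e then cut_vector e b * real n else 0)"
    using cut_vector_other_edge[OF e] cut_vector_jump[OF e] by (intro sum.cong) auto
  then show ?thesis
    using finite_edges e by simp
qed

lemma sum_cut_vector:
  assumes e: "e \<in> E"
  shows "(\<Sum>v\<in>{1..n}. cut_vector e v) = 0"
proof -
  have fin: "finite (Hd e)" "finite (Tl e)"
    using finite_subset[OF head_tail_subset(1)] finite_subset[OF head_tail_subset(2)] by simp_all
  have "(\<Sum>v\<in>Tl e. cut_vector e v) = (\<Sum>v\<in>Tl e. - real (card (Hd e)))"
    using head_tail_disjoint[OF e] by (intro sum.cong) (auto simp: cut_vector_def)
  moreover have "(\<Sum>v\<in>Hd e. cut_vector e v) = (\<Sum>v\<in>Hd e. real (card (Tl e)))"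
    by (simp add: cut_vector_def)
  moreover have "(\<Sum>v\<in>{1..n}. cut_vector e v) = (\<Sum>v\<in>Hd e. cut_vector e v) + (\<Sum>v\<in>Tl e. cut_vector e v)"
    using sum.union_disjoint[OF fin head_tail_disjoint[OF e]] head_tail_cover[OF e] by simp
  ultimately show ?thesis
    by simp
qed

lemma far_side_Max:
  assumes e: "e \<in> E"
  shows "far_side (Max e) e = Tl e"
proof -
  have "far_side (Max e) e = {v \<in> {1..n}. v \<notin> Hd e}"
    unfolding far_side_def head_comp_eq by auto
  also have "\<dots> = Tl e"
    using in_tail_iff[OF e] head_tail_subset(2) by blast
  finally show ?thesis .
qed

lemma far_side_Min:
  assumes e: "e \<in> E"
  shows "far_side (Min e) e = Hd e"
proof -
  have "far_side (Min e) e = {v \<in> {1..n}. v \<notin> Tl e}"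
    unfolding far_side_def tail_comp_eq by auto
  also have "\<dots> = Hd e"
    using in_tail_iff[OF e] head_tail_subset(1) by blast
  finally show ?thesis .
qed

lemma incidence_cut_vector:
  assumes e: "e \<in> E" and a: "a \<in> e" and b: "b \<in> {1..n}"
  shows "incidence e a * cut_vector e b = real (card (far_side a e)) - (if b \<in> far_side a e then real n else 0)"
proof -
  have n: "real n = real (card (Hd e)) + real (card (Tl e))"
    using card_head_tail[OF e] by simp
  have "a = Max e \<or> a = Min e"
    using a edge_Min_Max(1)[OF e] by blast
  then show ?thesis
  proof
    assume "a = Max e"
    then show ?thesis
      using far_side_Max[OF e] in_tail_iff[OF e b] n by (simp add: incidence_def cut_vector_def)
  next
    assume "a = Min e"
    then show ?thesis
      using far_side_Min[OF e] edge_Min_Max(2)[OF e] n by (simp add: incidence_def cut_vector_def)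
  qed
qed

lemma incidence_notin: "e \<in> E \<Longrightarrow> a \<notin> e \<Longrightarrow> incidence e a = 0"
  using edge_Min_Max(1) by (fastforce simp: incidence_def)

lemma far_side_cover:
  assumes a: "a \<in> {1..n}"
  shows "(\<Union>e\<in>{e \<in> E. a \<in> e}. far_side a e) = {1..n} - {a}"
proof
  show "(\<Union>e\<in>{e \<in> E. a \<in> e}. far_side a e) \<subseteq> {1..n} - {a}"
    unfolding far_side_def using reachable_refl by blast
  show "{1..n} - {a} \<subseteq> (\<Union>e\<in>{e \<in> E. a \<in> e}. far_side a e)"
  proof
    fix v
    assume v: "v \<in> {1..n} - {a}"
    then obtain e where "e \<in> E" "a \<in> e" "\<not> reachable (E - {e}) a v"
      using unique_separating_edge_at[OF a, of v] by auto
    then show "v \<in> (\<Union>e\<in>{e \<in> E. a \<in> e}. far_side a e)"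
      using v unfolding far_side_def by auto
  qed
qed

lemma far_side_disjoint:
  assumes a: "a \<in> {1..n}" and "e \<in> E" "a \<in> e" "f \<in> E" "a \<in> f" "e \<noteq> f"
  shows "far_side a e \<inter> far_side a f = {}"
proof (rule ccontr)
  assume "far_side a e \<inter> far_side a f \<noteq> {}"
  then obtain v where v: "v \<in> {1..n}" "\<not> reachable (E - {e}) a v" "\<not> reachable (E - {f}) a v"
    unfolding far_side_def by blast
  then have "a \<noteq> v"
    using reachable_refl by metis
  then show False
    using unique_separating_edge_at[OF a v(1)] v assms(2-6) by blast
qed

lemma sum_card_far_side:
  assumes a: "a \<in> {1..n}"
  shows "(\<Sum>e\<in>{e \<in> E. a \<in> e}. real (card (far_side a e))) = real n - 1"
proof -
  have "(\<Sum>e\<in>{e \<in> E. a \<in> e}. card (far_side a e)) = card (\<Union>e\<in>{e \<in> E. a \<in> e}. far_side a e)"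
    using finite_edges far_side_disjoint[OF a]
    by (intro card_UN_disjoint[symmetric]) (auto simp: far_side_def)
  also have "\<dots> = n - 1"
    using a unfolding far_side_cover[OF a] by simp
  finally show ?thesis
    using a by (simp flip: of_nat_sum add: of_nat_diff)
qed

lemma card_far_side_containing:
  assumes a: "a \<in> {1..n}" and b: "b \<in> {1..n}"
  shows "card {e \<in> {e \<in> E. a \<in> e}. b \<in> far_side a e} = (if a = b then 0 else 1)"
proof (cases "a = b")
  case True
  then show ?thesis
    unfolding far_side_def using reachable_refl by simp
next
  case False
  then obtain e0 where "e0 \<in> E \<and> a \<in> e0 \<and> \<not> reachable (E - {e0}) a b"
    and "\<And>e. e \<in> E \<and> a \<in> e \<and> \<not> reachable (E - {e}) a b \<Longrightarrow> e = e0"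
    using unique_separating_edge_at[OF a b] by blast
  then have "{e \<in> {e \<in> E. a \<in> e}. b \<in> far_side a e} = {e0}"
    using b unfolding far_side_def by blast
  then show ?thesis
    using False by simp
qed

lemma sum_incidence_cut_vector:
  assumes a: "a \<in> {1..n}" and b: "b \<in> {1..n}"
  shows "(\<Sum>e\<in>E. incidence e a * cut_vector e b) = (if a = b then real n else 0) - 1"
proof -
  let ?Ea = "{e \<in> E. a \<in> e}"
  have fin: "finite ?Ea"
    using finite_edges by simp
  have "(\<Sum>e\<in>E. incidence e a * cut_vector e b) = (\<Sum>e\<in>?Ea. incidence e a * cut_vector e b)"
    using incidence_notin by (intro sum.mono_neutral_right finite_edges) auto
  also have "\<dots> = (\<Sum>e\<in>?Ea. real (card (far_side a e))) - (\<Sum>e\<in>?Ea. if b \<in> far_side a e then real n else 0)"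
    using incidence_cut_vector[OF _ _ b] by (simp add: sum_subtractf)
  also have "(\<Sum>e\<in>?Ea. if b \<in> far_side a e then real n else 0)
      = real n * real (card {e \<in> ?Ea. b \<in> far_side a e})"
    using sum.inter_filter[OF fin, of "\<lambda>_. real n" "\<lambda>e. b \<in> far_side a e"] by (simp add: mult.commute)
  finally show ?thesis
    using sum_card_far_side[OF a] card_far_side_containing[OF a b] by simp
qed

section \<open>The Moore-Penrose inverse of the signless Laplacian\<close>

definition Q_entry :: "nat \<Rightarrow> nat \<Rightarrow> real" where
  "Q_entry u v = (\<Sum>e\<in>E. if u \<in> e \<and> v \<in> e then 1 else 0)"

definition cut_gram :: "nat \<Rightarrow> nat \<Rightarrow> real" where
  "cut_gram u v = (\<Sum>e\<in>E. cut_vector e u * cut_vector e v)"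

definition Qplus_entry :: "nat \<Rightarrow> nat \<Rightarrow> real" where
  "Qplus_entry u v = vertex_sign u * vertex_sign v * cut_gram u v / (real n)\<^sup>2"

definition proj_entry :: "nat \<Rightarrow> nat \<Rightarrow> real" where
  "proj_entry u v = (if u = v then 1 else 0) - vertex_sign u * vertex_sign v / real n"

lemma Q_entry_sym: "Q_entry u v = Q_entry v u"
  unfolding Q_entry_def by (meson conj_commute)

lemma Qplus_entry_sym: "Qplus_entry u v = Qplus_entry v u"
  unfolding Qplus_entry_def cut_gram_def by (simp add: mult.commute)

lemma proj_entry_sym: "proj_entry u v = proj_entry v u"
  unfolding proj_entry_def by (simp add: mult.commute)

lemma Q_entry_eq:
  assumes "u \<in> {1..n}" and "v \<in> {1..n}"
  shows "Q_entry u v = (if u = v then real (degree E u) else 0) + (if {u, v} \<in> E then 1 else 0)"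
proof -
  have card: "Q_entry u v = real (card {e \<in> E. u \<in> e \<and> v \<in> e})"
    unfolding Q_entry_def using sum.inter_filter[OF finite_edges, of "\<lambda>_. 1::real"] by simp
  show ?thesis
  proof (cases "u = v")
    case True
    have "{u} \<notin> E"
    proof
      assume "{u} \<in> E"
      then obtain a b where "{u} = {a, b}" "a \<noteq> b"
        by (rule edgeE)
      then show False
        by blast
    qed
    then show ?thesis
      using True card by (simp add: degree_def)
  next
    case False
    have "{e \<in> E. u \<in> e \<and> v \<in> e} = (if {u, v} \<in> E then {{u, v}} else {})"
    proof (intro equalityI subsetI)
      fix e
      assume e: "e \<in> {e \<in> E. u \<in> e \<and> v \<in> e}"
      then obtain a b where "e = {a, b}"
        by (auto elim: edgeE)
      then have "e = {u, v}"
        using e False by auto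
      then show "e \<in> (if {u, v} \<in> E then {{u, v}} else {})"
        using e by auto
    qed (auto split: if_splits)
    then show ?thesis
      using False card by simp
  qed
qed

lemma signless_laplacian_eq: "signless_laplacian n E = vertex_mat n Q_entry"
proof -
  have "signless_laplacian n E = vertex_mat n
      (\<lambda>u v. (if u = v then real (degree E u) else 0) + (if {u, v} \<in> E then 1 else 0))"
    by (intro eq_matI) (simp_all add: signless_laplacian_def vertex_mat_def)
  also have "\<dots> = vertex_mat n Q_entry"
    using Q_entry_eq by (intro vertex_mat_cong) simp
  finally show ?thesis .
qed

lemma sum_edge_ends:
  assumes e: "e \<in> E"
  shows "(\<Sum>v\<in>{1..n}. if v \<in> e then g v else 0) = g (Min e) + g (Max e)"
proof -
  have "(\<Sum>v\<in>{1..n}. if v \<in> e then g v else 0) = sum g ({1..n} \<inter> e)"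
    by (simp add: sum.inter_restrict)
  also have "{1..n} \<inter> e = {Min e, Max e}"
    using edge_subset[OF e] edge_Min_Max(1)[OF e] by auto
  finally show ?thesis
    using edge_Min_Max(2)[OF e] by simp
qed

lemma vertex_sign_Max_eq_incidence:
  assumes e: "e \<in> E"
  shows "(if u \<in> e then vertex_sign (Max e) else 0) = vertex_sign u * incidence e u"
proof (cases "u \<in> e")
  case True
  then have "u = Max e \<or> u = Min e"
    using edge_Min_Max(1)[OF e] by blast
  then show ?thesis
    using True edge_Min_Max(2)[OF e] vertex_sign_Max[OF e] by (auto simp: incidence_def)
qed (simp add: incidence_notin[OF e])

lemma Qplus_entry_edge_sum:
  assumes e: "e \<in> E"
  shows "Qplus_entry (Min e) t + Qplus_entry (Max e) t
    = vertex_sign t * vertex_sign (Max e) * cut_vector e t / real n"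
proof -
  have "cut_gram (Max e) t - cut_gram (Min e) t
      = (\<Sum>f\<in>E. cut_vector f t * (cut_vector f (Max e) - cut_vector f (Min e)))"
    unfolding cut_gram_def by (simp add: algebra_simps flip: sum_subtractf)
  also have "\<dots> = real n * cut_vector e t"
    by (rule sum_cut_vector_jump[OF e])
  finally have jump: "cut_gram (Max e) t - cut_gram (Min e) t = real n * cut_vector e t" .
  have "Qplus_entry (Min e) t + Qplus_entry (Max e) t
      = vertex_sign t * vertex_sign (Max e) * (cut_gram (Max e) t - cut_gram (Min e) t) / (real n)\<^sup>2"
    unfolding Qplus_entry_def vertex_sign_Max[OF e] by (simp add: algebra_simps diff_divide_distrib)
  also have "\<dots> = vertex_sign t * vertex_sign (Max e) * cut_vector e t / real n"
    unfolding jump by (simp add: power2_eq_square)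
  finally show ?thesis .
qed

lemma Q_times_Qplus:
  assumes u: "u \<in> {1..n}" and t: "t \<in> {1..n}"
  shows "(\<Sum>v\<in>{1..n}. Q_entry u v * Qplus_entry v t) = proj_entry u t"
proof -
  have "(\<Sum>v\<in>{1..n}. Q_entry u v * Qplus_entry v t)
      = (\<Sum>e\<in>E. \<Sum>v\<in>{1..n}. if u \<in> e \<and> v \<in> e then Qplus_entry v t else 0)"
    unfolding Q_entry_def sum_distrib_right by (subst sum.swap) (intro sum.cong refl, simp)
  also have "\<dots> = (\<Sum>e\<in>E. vertex_sign t * vertex_sign u / real n * (incidence e u * cut_vector e t))"
  proof (rule sum.cong[OF refl])
    fix e
    assume e: "e \<in> E"
    have "(\<Sum>v\<in>{1..n}. if u \<in> e \<and> v \<in> e then Qplus_entry v t else 0)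
        = (if u \<in> e then vertex_sign (Max e) else 0) * (vertex_sign t * cut_vector e t / real n)"
      using sum_edge_ends[OF e, of "\<lambda>v. Qplus_entry v t"] Qplus_entry_edge_sum[OF e] by simp
    then show "(\<Sum>v\<in>{1..n}. if u \<in> e \<and> v \<in> e then Qplus_entry v t else 0)
        = vertex_sign t * vertex_sign u / real n * (incidence e u * cut_vector e t)"
      unfolding vertex_sign_Max_eq_incidence[OF e] by simp
  qed
  also have "\<dots> = vertex_sign t * vertex_sign u / real n * (\<Sum>e\<in>E. incidence e u * cut_vector e t)"
    by (simp add: sum_distrib_left)
  also have "\<dots> = vertex_sign t * vertex_sign u / real n * ((if u = t then real n else 0) - 1)"
    unfolding sum_incidence_cut_vector[OF u t] ..
  also have "\<dots> = proj_entry u t"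
    using u vertex_sign_square[of u] by (auto simp: proj_entry_def field_simps)
  finally show ?thesis .
qed

lemma sign_times_Q:
  assumes t: "t \<in> {1..n}"
  shows "(\<Sum>v\<in>{1..n}. vertex_sign v * Q_entry v t) = 0"
proof -
  have "(\<Sum>v\<in>{1..n}. vertex_sign v * Q_entry v t)
      = (\<Sum>e\<in>E. \<Sum>v\<in>{1..n}. if v \<in> e \<and> t \<in> e then vertex_sign v else 0)"
    unfolding Q_entry_def sum_distrib_left by (subst sum.swap) (intro sum.cong refl, simp)
  also have "\<dots> = (\<Sum>e\<in>E. if t \<in> e then vertex_sign (Min e) + vertex_sign (Max e) else 0)"
    using sum_edge_ends[of _ vertex_sign] by (intro sum.cong refl) (simp add: if_distrib conj_commute)
  also have "\<dots> = 0"
    using vertex_sign_Max by (simp add: sum.neutral)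
  finally show ?thesis .
qed

lemma proj_times_Q:
  assumes u: "u \<in> {1..n}" and t: "t \<in> {1..n}"
  shows "(\<Sum>v\<in>{1..n}. proj_entry u v * Q_entry v t) = Q_entry u t"
proof -
  have "(\<Sum>v\<in>{1..n}. proj_entry u v * Q_entry v t)
      = (\<Sum>v\<in>{1..n}. (if u = v then Q_entry v t else 0) - vertex_sign u / real n * (vertex_sign v * Q_entry v t))"
    by (intro sum.cong refl) (simp add: proj_entry_def algebra_simps)
  also have "\<dots> = (\<Sum>v\<in>{1..n}. if u = v then Q_entry v t else 0)
      - vertex_sign u / real n * (\<Sum>v\<in>{1..n}. vertex_sign v * Q_entry v t)"
    by (simp add: sum_subtractf sum_distrib_left)
  also have "\<dots> = Q_entry u t"
    using u sign_times_Q[OF t] by simp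
  finally show ?thesis .
qed

lemma Qplus_times_sign:
  assumes u: "u \<in> {1..n}"
  shows "(\<Sum>v\<in>{1..n}. Qplus_entry u v * vertex_sign v) = 0"
proof -
  have "(\<Sum>v\<in>{1..n}. Qplus_entry u v * vertex_sign v) = vertex_sign u / (real n)\<^sup>2 * (\<Sum>v\<in>{1..n}. cut_gram u v)"
    unfolding Qplus_entry_def sum_distrib_left
    by (intro sum.cong refl) (simp add: algebra_simps vertex_sign_square[unfolded power2_eq_square])
  also have "(\<Sum>v\<in>{1..n}. cut_gram u v) = (\<Sum>e\<in>E. cut_vector e u * (\<Sum>v\<in>{1..n}. cut_vector e v))"
    unfolding cut_gram_def sum_distrib_left by (rule sum.swap)
  also have "\<dots> = 0"
    using sum_cut_vector by simp
  finally show ?thesis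
    by simp
qed

lemma Qplus_times_proj:
  assumes u: "u \<in> {1..n}" and t: "t \<in> {1..n}"
  shows "(\<Sum>v\<in>{1..n}. Qplus_entry u v * proj_entry v t) = Qplus_entry u t"
proof -
  have "(\<Sum>v\<in>{1..n}. Qplus_entry u v * proj_entry v t)
      = (\<Sum>v\<in>{1..n}. (if v = t then Qplus_entry u v else 0) - Qplus_entry u v * vertex_sign v * (vertex_sign t / real n))"
    by (intro sum.cong refl) (simp add: proj_entry_def algebra_simps)
  also have "\<dots> = (\<Sum>v\<in>{1..n}. if v = t then Qplus_entry u v else 0)
      - (\<Sum>v\<in>{1..n}. Qplus_entry u v * vertex_sign v) * (vertex_sign t / real n)"
    by (simp add: sum_subtractf sum_distrib_right sum_divide_distrib)
  also have "\<dots> = Qplus_entry u t"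
    using t Qplus_times_sign[OF u] by simp
  finally show ?thesis .
qed

lemma MP_inverse_signless_laplacian:
  "MP_inverse (signless_laplacian n E) = vertex_mat n Qplus_entry"
proof -
  let ?Q = "vertex_mat n Q_entry" and ?X = "vertex_mat n Qplus_entry" and ?P = "vertex_mat n proj_entry"
  have "?Q * ?X = ?P"
    unfolding times_vertex_mat using Q_times_Qplus by (rule vertex_mat_cong)
  moreover have "?X * ?Q = ?P"
    unfolding times_vertex_mat
    using Q_times_Qplus by (intro vertex_mat_cong) (simp add: Q_entry_sym Qplus_entry_sym proj_entry_sym mult.commute)
  moreover have "?P * ?Q = ?Q"
    unfolding times_vertex_mat using proj_times_Q by (rule vertex_mat_cong)
  moreover have "?P * ?X = ?X"
    unfolding times_vertex_mat
    using Qplus_times_proj by (intro vertex_mat_cong) (simp add: Qplus_entry_sym proj_entry_sym mult.commute)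
  moreover have "transpose_mat ?P = ?P"
    unfolding transpose_vertex_mat using proj_entry_sym by simp
  ultimately have "is_MP_inverse ?Q ?X"
    using vertex_mat_carrier by (intro is_MP_inverse_projectionI)
  then show ?thesis
    unfolding signless_laplacian_eq by (rule MP_inverse_eqI[OF vertex_mat_carrier])
qed

lemma cut_gram_eq_side_sums:
  assumes i: "i \<in> {1..n}" and j: "j \<in> {1..n}"
  shows "cut_gram i j =
      (\<Sum>e\<in>{e\<in>E. i \<in> Hd e \<and> j \<in> Hd e}. real (card (Tl e))^2)
    + (\<Sum>e\<in>{e\<in>E. i \<in> Tl e \<and> j \<in> Tl e}. real (card (Hd e))^2)
    - (\<Sum>e\<in>{e\<in>E. e \<in> path_edges E i j}. real (card (Hd e)) * real (card (Tl e)))"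
proof -
  have "cut_vector e i * cut_vector e j =
      (if i \<in> Hd e \<and> j \<in> Hd e then real (card (Tl e))^2 else 0)
    + (if i \<in> Tl e \<and> j \<in> Tl e then real (card (Hd e))^2 else 0)
    - (if e \<in> path_edges E i j then real (card (Hd e)) * real (card (Tl e)) else 0)" if e: "e \<in> E" for e
  proof -
    have "e \<in> path_edges E i j \<longleftrightarrow> \<not> (i \<in> Hd e \<longleftrightarrow> j \<in> Hd e)"
      using path_edges_eq_separating[OF i j] reachable_delete_edge_iff[OF e i j] e by simp
    then show ?thesis
      unfolding cut_vector_def in_tail_iff[OF e i] in_tail_iff[OF e j]
      by (cases "i \<in> Hd e"; cases "j \<in> Hd e") (simp_all add: power2_eq_square)
  qed
  then have "cut_gram i j = (\<Sum>e\<in>E. (if i \<in> Hd e \<and> j \<in> Hd e then real (card (Tl e))^2 else 0)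
    + (if i \<in> Tl e \<and> j \<in> Tl e then real (card (Hd e))^2 else 0)
    - (if e \<in> path_edges E i j then real (card (Hd e)) * real (card (Tl e)) else 0))"
    unfolding cut_gram_def by (rule sum.cong[OF refl])
  then show ?thesis
    by (simp only: sum.distrib sum_subtractf sum.inter_filter[OF finite_edges])
qed

end

theorem mainTheorem3:
  fixes n :: nat and E :: "nat set set"
  assumes "is_tree {1..n} E"
    and "i \<in> {1..n}" and "j \<in> {1..n}"
  shows "MP_inverse (signless_laplacian n E) $$ (i - 1, j - 1) =
    (-1) ^ gdist E i j / (real n)^2 *
      ((\<Sum>e\<in>{e\<in>E. i \<in> head_comp {1..n} E e \<and> j \<in> head_comp {1..n} E e}.
           real (card (tail_comp {1..n} E e))^2)
     + (\<Sum>e\<in>{e\<in>E. i \<in> tail_comp {1..n} E e \<and> j \<in> tail_comp {1..n} E e}.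
           real (card (head_comp {1..n} E e))^2)
     - (\<Sum>e\<in>{e\<in>E. e \<in> path_edges E i j}.
           real (card (head_comp {1..n} E e)) * real (card (tail_comp {1..n} E e))))"
proof -
  interpret tree_graph n E
    by unfold_locales (rule assms(1))
  have "i - 1 < n" "j - 1 < n" "Suc (i - 1) = i" "Suc (j - 1) = j"
    using assms(2,3) by auto
  then have "MP_inverse (signless_laplacian n E) $$ (i - 1, j - 1) = Qplus_entry i j"
    unfolding MP_inverse_signless_laplacian by simp
  also have "\<dots> = (-1) ^ gdist E i j / (real n)^2 * cut_gram i j"
    unfolding Qplus_entry_def power_gdist_eq_vertex_sign[OF assms(2,3)] by simp
  finally show ?thesis
    unfolding cut_gram_eq_side_sums[OF assms(2,3)] .
qed

end
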